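(* Let $X$ be a locally compact Hausdorff space and $\sigma:X\to X$ a homeomorphism. Let $S\subset\{1,2,3,\dots\}$ be a non-empty (finite or infinite) set and $P_S=\{p\in\{1,2,3,\dots\}: p\text{ divides some }s\in S\}$. Then $$\bigcup_{p\in P_S}\mathrm{Per}_p(\sigma)^\circ\subset\bigcup_{s\in S}\mathrm{Fix}_s(\sigma)^\circ\subset\Big(\bigcup_{s\in S}\mathrm{Fix}_s(\sigma)\Big)^\circ\subset\overline{\bigcup_{p\in P_S}\mathrm{Per}_p(\sigma)^\circ},$$ $$\bigcup_{p\in P_S}\mathrm{Per}_p(\sigma)^\circ\subset\Big(\bigcup_{p\in P_S}\mathrm{Per}_p(\sigma)\Big)^\circ\subset\Big(\bigcup_{s\in S}\mathrm{Fix}_s(\sigma)\Big)^\circ,$$ and $$\overline{\Big(\bigcup_{p\in P_S}\mathrm{Per}_p(\sigma)\Big)^\circ}=\overline{\bigcup_{p\in P_S}\mathrm{Per}_p(\sigma)^\circ}=\overline{\bigcup_{s\in S}\mathrm{Fix}_s(\sigma)^\circ}=\overline{\Big(\bigcup_{s\in S}\mathrm{Fix}_s(\sigma)\Big)^\circ}.$$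
   Context: For $n\ge1$, $\mathrm{Fix}_n(\sigma)=\{x\in X:\sigma^nx=x\}$ and $\mathrm{Per}_p(\sigma)$ is the set of points of least period exactly $p$. A superscript $\circ$ denotes interior in $X$ and an overline denotes closure in $X$. *)

theory Defs
  imports "HOL-Analysis.Analysis"
begin

definition Fix :: "'a topology \<Rightarrow> ('a \<Rightarrow> 'a) \<Rightarrow> nat \<Rightarrow> 'a set" where
  "Fix X \<sigma> n = {x \<in> topspace X. (\<sigma> ^^ n) x = x}"

definition Per :: "'a topology \<Rightarrow> ('a \<Rightarrow> 'a) \<Rightarrow> nat \<Rightarrow> 'a set" where
  "Per X \<sigma> p = {x \<in> topspace X. 0 < p \<and> (\<sigma> ^^ p) x = x \<and> (\<forall>k. 0 < k \<and> k < p \<longrightarrow> (\<sigma> ^^ k) x \<noteq> x)}"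

definition divisor_set :: "nat set \<Rightarrow> nat set" where
  "divisor_set S = {p. 0 < p \<and> (\<exists>s\<in>S. p dvd s)}"

end

theory Submission
  imports Defs
begin

text \<open>
  Every point of an open set \<open>V \<subseteq> Fix s\<close> has a least period dividing \<open>s\<close>. If \<open>p\<close> is the
  largest period occurring in \<open>V\<close>, then removing the closed sets \<open>Fix q\<close>, \<open>0 < q < p\<close>, from \<open>V\<close>
  leaves an open subset of \<open>Per p\<close> containing the points of period \<open>p\<close>; so \<open>V\<close> meets some
  \<open>Per p\<^sup>\<circ>\<close> with \<open>p dvd s\<close>. By the Baire category theorem on the locally compact Hausdorff
  space \<open>X\<close>, every nonempty open subset of \<open>\<Union>s\<in>S. Fix s\<close> meets the interior of a single
  closed set \<open>Fix s\<close>, so \<open>(\<Union>s\<in>S. Fix s)\<^sup>\<circ>\<close> lies in the closure of \<open>\<Union>p\<in>P\<^sub>S. Per p\<^sup>\<circ>\<close>.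
  The other inclusions are monotonicity, and the equalities of closures follow by sandwiching.
\<close>

lemma continuous_map_funpow:
  assumes "continuous_map X X f"
  shows "continuous_map X X (f ^^ n)"
proof (induction n)
  case (Suc n)
  show ?case using continuous_map_compose[OF Suc.IH assms] by (simp add: comp_def)
qed simp

lemma closedin_Fix:
  assumes "Hausdorff_space X" "continuous_map X X f"
  shows "closedin X (Fix X f n)"
  unfolding Fix_def
  by (rule closedin_continuous_maps_eq[OF assms(1) continuous_map_funpow[OF assms(2)]]) simp

lemma funpow_mult_fixpoint:
  assumes "(f ^^ p) y = y"
  shows "(f ^^ (p * n)) y = y"
  using assms by (induction n) (auto simp: funpow_add)

lemma Per_dvd:
  assumes "y \<in> Per X f p" "(f ^^ s) y = y"
  shows "p dvd s"
proof -
  from assms(1) have p: "0 < p" "(f ^^ p) y = y"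
    and minimal: "\<And>k. 0 < k \<Longrightarrow> k < p \<Longrightarrow> (f ^^ k) y \<noteq> y"
    by (auto simp: Per_def)
  have "(f ^^ s) y = (f ^^ (s mod p)) ((f ^^ (p * (s div p))) y)"
    by (metis comp_apply funpow_add mod_mult_div_eq)
  then have "(f ^^ (s mod p)) y = y"
    using assms(2) funpow_mult_fixpoint[OF p(2)] by simp
  with minimal p(1) have "s mod p = 0"
    by (meson mod_less_divisor neq0_conv)
  then show ?thesis by auto
qed

lemma Per_subset_Fix:
  assumes "p dvd s"
  shows "Per X f p \<subseteq> Fix X f s"
proof
  fix y assume "y \<in> Per X f p"
  moreover obtain n where "s = p * n" using assms by blast
  ultimately show "y \<in> Fix X f s"
    using funpow_mult_fixpoint by (auto simp: Per_def Fix_def)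
qed

lemma Union_divisor_set_Per_subset_Union_Fix:
  assumes "mono F"
  shows "(\<Union>p\<in>divisor_set S. F (Per X f p)) \<subseteq> (\<Union>s\<in>S. F (Fix X f s))"
proof (rule UN_least)
  fix p assume "p \<in> divisor_set S"
  then obtain s where "s \<in> S" "p dvd s" by (auto simp: divisor_set_def)
  then show "F (Per X f p) \<subseteq> (\<Union>s\<in>S. F (Fix X f s))"
    using monoD[OF assms Per_subset_Fix] by blast
qed

lemma Fix_obtains_Per:
  assumes "y \<in> Fix X f s" "0 < s"
  obtains p where "y \<in> Per X f p" "p dvd s"
proof -
  define p where "p = (LEAST k. 0 < k \<and> (f ^^ k) y = y)"
  have fixed: "(f ^^ s) y = y" using assms(1) by (simp add: Fix_def)
  then have p: "0 < p \<and> (f ^^ p) y = y"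
    unfolding p_def using assms(2) by (intro LeastI) simp
  moreover have "\<And>k. 0 < k \<Longrightarrow> k < p \<Longrightarrow> (f ^^ k) y \<noteq> y"
    using not_less_Least p_def by blast
  ultimately have "y \<in> Per X f p" using assms(1) by (auto simp: Per_def Fix_def)
  moreover from this fixed have "p dvd s" by (rule Per_dvd)
  ultimately show ?thesis by (rule that)
qed

lemma Int_Per_subset_interior_if_maximal_period:
  assumes "Hausdorff_space X" "continuous_map X X f" "openin X V" "V \<subseteq> Fix X f s" "0 < s"
    and maximal: "\<And>y q. y \<in> V \<Longrightarrow> y \<in> Per X f q \<Longrightarrow> q \<le> p"
  shows "V \<inter> Per X f p \<subseteq> X interior_of Per X f p"
proof -
  define V' where "V' = V - (\<Union>q\<in>{0<..<p}. Fix X f q)"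
  have "openin X V'" unfolding V'_def
    by (intro openin_diff assms(3) closedin_Union finite_imageI)
      (auto intro: closedin_Fix[OF assms(1,2)])
  moreover have "V' \<subseteq> Per X f p"
  proof
    fix w assume "w \<in> V'"
    then have w: "w \<in> V" and not_Fix: "\<And>q. 0 < q \<Longrightarrow> q < p \<Longrightarrow> w \<notin> Fix X f q"
      unfolding V'_def by auto
    from w assms(4) have "w \<in> Fix X f s" by blast
    then obtain r where r: "w \<in> Per X f r"
      using assms(5) by (rule Fix_obtains_Per)
    then have "0 < r" "w \<in> Fix X f r" by (auto simp: Per_def Fix_def)
    with not_Fix have "p \<le> r" by (meson not_less)
    with maximal[OF w r] have "r = p" by simp
    with r show "w \<in> Per X f p" by simp
  qed
  ultimately have "V' \<subseteq> X interior_of Per X f p"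
    by (simp add: interior_of_maximal)
  moreover have "V \<inter> Per X f p \<subseteq> V'"
    unfolding V'_def by (auto simp: Per_def Fix_def)
  ultimately show ?thesis by blast
qed

lemma openin_subset_Fix_meets_interior_Per:
  assumes "Hausdorff_space X" "continuous_map X X f"
    and "openin X V" "V \<noteq> {}" "V \<subseteq> Fix X f s" "0 < s"
  shows "\<exists>p. p dvd s \<and> V \<inter> X interior_of Per X f p \<noteq> {}"
proof -
  define D where "D = {p. V \<inter> Per X f p \<noteq> {}}"
  have D_dvd: "p dvd s" if "p \<in> D" for p
  proof -
    obtain y where "y \<in> V" "y \<in> Per X f p" using \<open>p \<in> D\<close> by (auto simp: D_def)
    with assms(5) show ?thesis by (auto simp: Fix_def intro: Per_dvd)
  qed
  then have "finite D"
    by (intro finite_subset[OF _ finite_divisors_nat[OF assms(6)]]) blast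
  obtain y where "y \<in> V" using assms(4) by blast
  with assms(5) have "y \<in> Fix X f s" by blast
  then obtain r where "y \<in> Per X f r" using assms(6) by (rule Fix_obtains_Per)
  with \<open>y \<in> V\<close> have "r \<in> D" by (auto simp: D_def)
  define p where "p = Max D"
  have "p \<in> D" unfolding p_def using \<open>finite D\<close> \<open>r \<in> D\<close> Max_in by blast
  have "V \<inter> Per X f p \<subseteq> X interior_of Per X f p"
    using \<open>finite D\<close> unfolding p_def
    by (intro Int_Per_subset_interior_if_maximal_period[OF assms(1,2,3,5,6)] Max_ge) (auto simp: D_def)
  with \<open>p \<in> D\<close> have "V \<inter> X interior_of Per X f p \<noteq> {}"
    unfolding D_def by blast
  with D_dvd[OF \<open>p \<in> D\<close>] show ?thesis by blast
qed

lemma Baire_open_subset_Union_closedin: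
  assumes "locally_compact_space X" "Hausdorff_space X"
    and "openin X W" "W \<noteq> {}" "countable \<F>" "\<And>T. T \<in> \<F> \<Longrightarrow> closedin X T" "W \<subseteq> \<Union>\<F>"
  shows "\<exists>T\<in>\<F>. W \<inter> X interior_of T \<noteq> {}"
proof -
  define Y where "Y = subtopology X W"
  have topspace_Y: "topspace Y = W"
    using openin_subset[OF assms(3)] by (auto simp: Y_def)
  have lc: "locally_compact_space Y"
    unfolding Y_def using assms(1-3) by (intro locally_compact_space_open_subset) auto
  have regular: "regular_space Y"
    using lc assms(2) by (intro locally_compact_Hausdorff_imp_regular_space)
      (auto simp: Y_def Hausdorff_space_subtopology)
  have "\<Union>((\<inter>) W ` \<F>) = topspace Y"
    using topspace_Y assms(7) by blast
  then have nonempty: "Y interior_of \<Union>((\<inter>) W ` \<F>) \<noteq> {}"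
    using assms(4) topspace_Y by (metis interior_of_topspace)
  have "\<not> (\<forall>T\<in>\<F>. Y interior_of (W \<inter> T) = {})"
  proof
    assume "\<forall>T\<in>\<F>. Y interior_of (W \<inter> T) = {}"
    then have "Y interior_of \<Union>((\<inter>) W ` \<F>) = {}"
      using assms(5,6)
      by (intro Baire_category_aux[OF lc regular]) (auto simp: Y_def closedin_subtopology_Int_closed)
    with nonempty show False by contradiction
  qed
  then obtain T where "T \<in> \<F>" and "Y interior_of (W \<inter> T) \<noteq> {}" by blast
  from this(2) have "W \<inter> X interior_of T \<noteq> {}"
    using interior_of_subtopology_open[OF assms(3)] interior_of_mono[OF Int_lower2, of X W T]
    by (auto simp: Y_def)
  with \<open>T \<in> \<F>\<close> show ?thesis by blast
qed

lemma interior_Union_Fix_subset_closure_Union_interior_Per: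
  assumes "Hausdorff_space X" "locally_compact_space X" "continuous_map X X f" "S \<subseteq> {1..}"
  shows "X interior_of (\<Union>s\<in>S. Fix X f s)
    \<subseteq> X closure_of (\<Union>p\<in>divisor_set S. X interior_of Per X f p)"
proof
  fix x assume x: "x \<in> X interior_of (\<Union>s\<in>S. Fix X f s)"
  show "x \<in> X closure_of (\<Union>p\<in>divisor_set S. X interior_of Per X f p)"
    unfolding in_closure_of
  proof (intro conjI allI impI)
    show "x \<in> topspace X" by (rule subsetD[OF interior_of_subset_topspace x])
    fix U assume U: "x \<in> U \<and> openin X U"
    define W where "W = U \<inter> X interior_of (\<Union>s\<in>S. Fix X f s)"
    have W: "openin X W" "W \<noteq> {}"
      unfolding W_def using U x by (blast intro: openin_Int openin_interior_of)+
    have "W \<subseteq> \<Union>(Fix X f ` S)"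
      unfolding W_def using interior_of_subset[of X "\<Union>(Fix X f ` S)"] by blast
    moreover have "countable (Fix X f ` S)"
      by (intro countable_image countableI_type)
    ultimately have "\<exists>T\<in>Fix X f ` S. W \<inter> X interior_of T \<noteq> {}"
      using closedin_Fix[OF assms(1,3)] by (intro Baire_open_subset_Union_closedin[OF assms(2,1) W]) auto
    then obtain s where s: "s \<in> S" "W \<inter> X interior_of Fix X f s \<noteq> {}" by blast
    define V where "V = W \<inter> X interior_of Fix X f s"
    have "openin X V" "V \<subseteq> Fix X f s"
      unfolding V_def using W(1) interior_of_subset[of X "Fix X f s"]
      by (blast intro: openin_Int openin_interior_of)+
    moreover have "0 < s" using s(1) assms(4) by auto
    moreover have "V \<noteq> {}" using s(2) by (simp add: V_def)
    ultimately obtain p where p: "p dvd s" "V \<inter> X interior_of Per X f p \<noteq> {}"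
      using openin_subset_Fix_meets_interior_Per[OF assms(1,3)] by blast
    have "p \<in> divisor_set S"
      using p(1) s(1) \<open>0 < s\<close> by (auto simp: divisor_set_def dvd_pos_nat)
    with p(2) show "\<exists>y. y \<in> (\<Union>p\<in>divisor_set S. X interior_of Per X f p) \<and> y \<in> U"
      unfolding V_def W_def by blast
  qed
qed

lemma closure_of_eq_if_subset_closure_of:
  assumes "A \<subseteq> B" "B \<subseteq> X closure_of A"
  shows "X closure_of B = X closure_of A"
  by (metis assms closure_of_closure_of closure_of_mono subset_antisym)

theorem propositionA1:
  fixes X :: "'a topology" and \<sigma> :: "'a \<Rightarrow> 'a" and S :: "nat set"
  assumes "Hausdorff_space X" and "locally_compact_space X"
    and "homeomorphic_map X X \<sigma>"
    and "S \<noteq> {}" and "S \<subseteq> {1..}"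
  defines "P \<equiv> divisor_set S"
  shows "(\<Union>p\<in>P. X interior_of Per X \<sigma> p) \<subseteq> (\<Union>s\<in>S. X interior_of Fix X \<sigma> s)
       \<and> (\<Union>s\<in>S. X interior_of Fix X \<sigma> s) \<subseteq> X interior_of (\<Union>s\<in>S. Fix X \<sigma> s)
       \<and> X interior_of (\<Union>s\<in>S. Fix X \<sigma> s) \<subseteq> X closure_of (\<Union>p\<in>P. X interior_of Per X \<sigma> p)
       \<and> (\<Union>p\<in>P. X interior_of Per X \<sigma> p) \<subseteq> X interior_of (\<Union>p\<in>P. Per X \<sigma> p)
       \<and> X interior_of (\<Union>p\<in>P. Per X \<sigma> p) \<subseteq> X interior_of (\<Union>s\<in>S. Fix X \<sigma> s)
       \<and> X closure_of (X interior_of (\<Union>p\<in>P. Per X \<sigma> p)) = X closure_of (\<Union>p\<in>P. X interior_of Per X \<sigma> p)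
       \<and> X closure_of (\<Union>p\<in>P. X interior_of Per X \<sigma> p) = X closure_of (\<Union>s\<in>S. X interior_of Fix X \<sigma> s)
       \<and> X closure_of (\<Union>s\<in>S. X interior_of Fix X \<sigma> s) = X closure_of (X interior_of (\<Union>s\<in>S. Fix X \<sigma> s))"
proof -
  define A where "A = (\<Union>p\<in>P. X interior_of Per X \<sigma> p)"
  define B where "B = (\<Union>s\<in>S. X interior_of Fix X \<sigma> s)"
  define C where "C = X interior_of (\<Union>s\<in>S. Fix X \<sigma> s)"
  define D where "D = X interior_of (\<Union>p\<in>P. Per X \<sigma> p)"
  have AB: "A \<subseteq> B"
    unfolding A_def B_def P_def
    by (rule Union_divisor_set_Per_subset_Union_Fix) (simp add: interior_of_mono monoI)
  have BC: "B \<subseteq> C"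
    unfolding B_def C_def by (intro UN_least interior_of_mono) auto
  have AD: "A \<subseteq> D"
    unfolding A_def D_def by (intro UN_least interior_of_mono) auto
  have "(\<Union>p\<in>P. Per X \<sigma> p) \<subseteq> (\<Union>s\<in>S. Fix X \<sigma> s)"
    unfolding P_def using Union_divisor_set_Per_subset_Union_Fix[where F="\<lambda>T. T"]
    by (simp add: mono_def)
  then have DC: "D \<subseteq> C"
    unfolding D_def C_def by (rule interior_of_mono)
  have CA: "C \<subseteq> X closure_of A"
    unfolding A_def C_def P_def
    using interior_Union_Fix_subset_closure_Union_interior_Per
      [OF assms(1,2) homeomorphic_imp_continuous_map[OF assms(3)] assms(5)] .
  have clB: "X closure_of B = X closure_of A"
    using AB order_trans[OF BC CA] by (rule closure_of_eq_if_subset_closure_of)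
  have clC: "X closure_of C = X closure_of A"
    using order_trans[OF AB BC] CA by (rule closure_of_eq_if_subset_closure_of)
  have clD: "X closure_of D = X closure_of A"
    using AD order_trans[OF DC CA] by (rule closure_of_eq_if_subset_closure_of)
  show ?thesis
    using AB BC CA AD DC clD clB[symmetric] trans[OF clB clC[symmetric]]
    unfolding A_def B_def C_def D_def by (intro conjI)
qed

end
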